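(* Let $\mathbb{F}$ be a field, $d\geq3$ and $V$ a vector space over $\mathbb{F}$ of dimension $d+1$. Let $E^*_0,\dots,E^*_d$ be a system of mutually orthogonal idempotents in $\mathrm{End}(V)$ and $A\in\mathrm{End}(V)$ with $E^*_iAE^*_j=0$ if $|i-j|>1$ and $E^*_iAE^*_j\neq0$ if $|i-j|=1$. Assume $A$ is multiplicity-free and bipartite with primitive idempotents $E_0,\dots,E_d$ and eigenvalues $\theta_0,\dots,\theta_d$. Let $\theta^*_0,\dots,\theta^*_d\in\mathbb{F}$ be mutually distinct and $A^*=\sum_i\theta^*_iE^*_i$. Assume $(E_0,E_1)$ is a tail and that the indexing is such that $E_2$ is the vertex of $\Delta$ other than $E_0$ adjacent to $E_1$. Fix a basis $v_0,\dots,v_d$ with $v_i\in E^*_iV$ and let $b_i,c_i,\alpha_i$ be as in the context. Let $a^*_i=\operatorname{tr}(E_iA^* )$, and let $b^*_0c^*_1$ be as in the context. Put $\psi=\theta^*_1+\theta^*_0-a^*_1-a^*_0$ and $\zeta=a^*_0a^*_1-b^*_0c^*_1-\theta^*_0\theta^*_1$. Then for $0\le i\le d$, $$c_i(\theta^*_{i-1}-\theta^*_0)(\theta^*_{i-1}-\theta^*_1)\alpha_{i-1}+b_i(\theta^*_{i+1}-\theta^*_0)(\theta^*_{i+1}-\theta^*_1)\alpha_{i+1}=\theta_2(\theta^*_i-\theta^*_0)(\theta^*_i-\theta^*_1)\alpha_i+(\theta_2-\theta_1)\psi\theta^*_i\alpha_i+(\theta_1-\theta_0)\psi a^*_0\alpha_i+(\theta_2-\theta_0)\zeta\alpha_i,$$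 where for $i=0$ the first term on the left (with coefficient $c_0=0$) and for $i=d$ the second term on the left (with coefficient $b_d=0$) are omitted.
   Context: A system of mutually orthogonal idempotents: $E^*_iE^*_j=\delta_{ij}E^*_i$, $\operatorname{rank}E^*_i=1$. $A$ multiplicity-free: $d+1$ distinct eigenvalues in $\mathbb{F}$; $E_i$ is the projection onto the $\theta_i$-eigenspace along the other eigenspaces. Bipartite: $\operatorname{tr}(E^*_iA)=0$ for all $i$. $\Delta$: graph on $E_0,\dots,E_d$ with $E_i\neq E_j$ adjacent iff $E_iA^*E_j\neq0$. $(E_0,E_1)$ is a tail if $E_0$ is adjacent to no vertex other than $E_1$ and $E_1$ is adjacent to at most one vertex other than $E_0$. The matrix $Y$ representing a map $X$ w.r.t. a basis $u_0,\dots,u_d$ satisfies $Xu_j=\sum_iY_{ij}u_i$. For the fixed basis $v_i\in E^*_iV$, the matrix of $A$ is tridiagonal with zero diagonal; $b_i$ ($0\le i\le d-1$) is its $(i,i+1)$-entry and $c_i$ ($1\le i\le d$) its $(i,i-1)$-entry; set $b_d=c_0=0$. The cosine sequence $\alpha_0,\dots,\alpha_d$ for $\theta_0$: $\alpha_0=1$ and $c_i\alpha_{i-1}+b_i\alpha_{i+1}=\theta_0\alpha_i$ for $0\le i\le d-1$ (equivalently $\sum_i\alpha_iv_i$ is the eigenvector of $A$ for $\theta_0$ with $\alpha_0=1$). For any basis $w_0,\dots,w_d$ with $w_i\in E_iV$, let $b^*_0$ and $c^*_1$ be the $(0,1)$- and $(1,0)$-entries of the matrix representing $A^*$; the product $b^*_0c^*_1$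 does not depend on this choice. *)

theory Defs
  imports "Jordan_Normal_Form.DL_Rank" "Jordan_Normal_Form.Char_Poly"
begin

definition mat_trace :: "'a::comm_ring_1 mat \<Rightarrow> 'a" where
  "mat_trace M = (\<Sum>i<dim_row M. M $$ (i, i))"

definition basis_mat :: "nat \<Rightarrow> (nat \<Rightarrow> 'a vec) \<Rightarrow> 'a mat" where
  "basis_mat m u = mat m m (\<lambda>(r, j). u j $ r)"

text \<open>Y represents X w.r.t. the basis u_0..u_(m-1): X u_j = sum_i Y_ij u_i, i.e. X * P = P * Y.\<close>
definition represents :: "nat \<Rightarrow> (nat \<Rightarrow> 'a::comm_ring_1 vec) \<Rightarrow> 'a mat \<Rightarrow> 'a mat \<Rightarrow> bool" where
  "represents m u X Y \<longleftrightarrow> Y \<in> carrier_mat m m \<and> X * basis_mat m u = basis_mat m u * Y"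

definition lin_comb_mat :: "nat \<Rightarrow> (nat \<Rightarrow> 'a::comm_ring_1) \<Rightarrow> (nat \<Rightarrow> 'a mat) \<Rightarrow> nat set \<Rightarrow> 'a mat" where
  "lin_comb_mat m c M K = mat m m (\<lambda>(r, s). \<Sum>k\<in>K. c k * M k $$ (r, s))"

end

theory Submission
  imports Defs
begin

text \<open>
  Let \<open>P\<close> and \<open>Q\<close> be the matrices with columns \<open>v\<^sub>i\<close> and \<open>w\<^sub>i\<close>, and \<open>N = Q\<inverse> P\<close>. Then
  \<open>N Y = diag(\<theta>) N\<close> and \<open>Z N = N diag(\<theta>\<^sup>*)\<close>: row \<open>l\<close> of \<open>N\<close> is a left eigenvector of the
  hollow tridiagonal matrix \<open>Y\<close> for \<open>\<theta>\<^sub>l\<close>. Since \<open>(E\<^sub>0, E\<^sub>1)\<close> is a tail whose other neighbour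
  is \<open>E\<^sub>2\<close>, rows 0 and 1 of \<open>Z\<close> are supported on \<open>{0,1}\<close> and \<open>{0,1,2}\<close>. Eliminating row 1 of
  \<open>N\<close> between them writes \<open>(\<theta>\<^sup>*\<^sub>j - \<theta>\<^sup>*\<^sub>0)(\<theta>\<^sup>*\<^sub>j - \<theta>\<^sup>*\<^sub>1) N\<^sub>0\<^sub>j\<close> as a combination of rows 0, 1, 2
  of \<open>N\<close>, on which \<open>Y\<close> acts by \<open>\<theta>\<^sub>0, \<theta>\<^sub>1, \<theta>\<^sub>2\<close>; eliminating once more expresses the image
  under \<open>Y\<close> through row 0 alone. Finally, a left eigenvector of \<open>Y\<close> for \<open>\<theta>\<^sub>0\<close> is the cosine
  sequence scaled by the weights that symmetrise \<open>Y\<close>, which turns this into the recurrence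
  for \<open>\<alpha>\<close>.
\<close>

section \<open>Hollow tridiagonal matrices\<close>

definition hollow_tridiagonal :: "nat \<Rightarrow> 'a::zero mat \<Rightarrow> bool" where
  "hollow_tridiagonal n Y \<longleftrightarrow> (\<forall>i<n. \<forall>j<n. i + 1 \<noteq> j \<and> j + 1 \<noteq> i \<longrightarrow> Y $$ (i, j) = 0)"

text \<open>Entry \<open>i\<close> of \<open>Y g\<close> for hollow tridiagonal \<open>Y\<close> of size \<open>d + 1\<close>; the conditionals drop the
  terms with the junk index \<open>0 - 1 = 0\<close> and the out-of-range index \<open>d + 1\<close>.\<close>

definition tridiag_mult_vec :: "nat \<Rightarrow> 'a::comm_ring_1 mat \<Rightarrow> (nat \<Rightarrow> 'a) \<Rightarrow> nat \<Rightarrow> 'a" where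
  "tridiag_mult_vec d Y g i =
     (if i = 0 then 0 else Y $$ (i, i - 1) * g (i - 1)) + (if i = d then 0 else Y $$ (i, i + 1) * g (i + 1))"

text \<open>With \<open>b(j) = Y(j, j+1)\<close> and \<open>c(j) = Y(j, j-1)\<close>, the weights
  \<open>k(j) = b(0) \<cdots> b(j-1) / (c(1) \<cdots> c(j))\<close> satisfy \<open>k(j+1) c(j+1) = k(j) b(j)\<close>, i.e.
  \<open>diag(k) Y\<close> is symmetric; so \<open>diag(k)\<close> maps right eigenvectors of \<open>Y\<close> to left ones.\<close>

fun tridiag_weight :: "'a::field mat \<Rightarrow> nat \<Rightarrow> 'a" where
  "tridiag_weight Y 0 = 1"
| "tridiag_weight Y (Suc j) = tridiag_weight Y j * Y $$ (j, Suc j) / Y $$ (Suc j, j)"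

lemma tridiag_weight_Suc_mult:
  "Y $$ (Suc j, j) \<noteq> 0 \<Longrightarrow> tridiag_weight Y (Suc j) * Y $$ (Suc j, j) = tridiag_weight Y j * Y $$ (j, Suc j)"
  by simp

lemma tridiag_weight_nonzero:
  assumes "\<And>i. i < d \<Longrightarrow> Y $$ (i, i + 1) \<noteq> 0" and "\<And>i. i < d \<Longrightarrow> Y $$ (i + 1, i) \<noteq> 0"
    and "j \<le> d"
  shows "tridiag_weight Y j \<noteq> 0"
  using assms(3)
proof (induction j)
  case (Suc j)
  then show ?case using assms(1,2)[of j] by simp
qed simp

lemma sum_supported_on_neighbours:
  fixes f :: "nat \<Rightarrow> 'a::comm_monoid_add"
  assumes i: "i \<le> d" and f: "\<And>j. j \<le> d \<Longrightarrow> j + 1 \<noteq> i \<Longrightarrow> i + 1 \<noteq> j \<Longrightarrow> f j = 0"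
  shows "(\<Sum>j<d+1. f j) = (if i = 0 then 0 else f (i - 1)) + (if i = d then 0 else f (i + 1))"
proof -
  let ?N = "{j. j < d + 1 \<and> (j + 1 = i \<or> i + 1 = j)}"
  have "(\<Sum>j<d+1. f j) = sum f ?N"
    by (rule sum.mono_neutral_right) (auto simp: f)
  also have "?N = (if i = 0 then {} else {i - 1}) \<union> (if i = d then {} else {i + 1})"
    using i by auto
  also have "sum f \<dots> = (if i = 0 then 0 else f (i - 1)) + (if i = d then 0 else f (i + 1))"
    using i by (auto simp: sum.union_disjoint add.commute)
  finally show ?thesis .
qed

lemma hollow_tridiagonal_left_mult:
  fixes Y :: "'a::comm_ring_1 mat"
  assumes "hollow_tridiagonal (d+1) Y" and "i \<le> d"
  shows "(\<Sum>j<d+1. f j * Y $$ (j, i)) =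
    (if i = 0 then 0 else f (i - 1) * Y $$ (i - 1, i)) + (if i = d then 0 else f (i + 1) * Y $$ (i + 1, i))"
  by (rule sum_supported_on_neighbours[OF assms(2)])
    (use assms in \<open>auto simp: hollow_tridiagonal_def\<close>)

lemma tridiag_weight_left_mult:
  fixes Y :: "'a::field mat"
  assumes Y: "hollow_tridiagonal (d+1) Y" and c: "\<And>j. j < d \<Longrightarrow> Y $$ (j + 1, j) \<noteq> 0"
    and i: "i \<le> d"
  shows "(\<Sum>j<d+1. tridiag_weight Y j * g j * Y $$ (j, i)) = tridiag_weight Y i * tridiag_mult_vec d Y g i"
proof -
  let ?k = "tridiag_weight Y"
  have lower: "?k (i - 1) * Y $$ (i - 1, i) = ?k i * Y $$ (i, i - 1)" if "i \<noteq> 0"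
    using tridiag_weight_Suc_mult[of Y "i - 1"] c[of "i - 1"] that i by simp
  have upper: "?k (i + 1) * Y $$ (i + 1, i) = ?k i * Y $$ (i, i + 1)" if "i \<noteq> d"
    using tridiag_weight_Suc_mult[of Y i] c[of i] that i by simp
  have "(\<Sum>j<d+1. ?k j * g j * Y $$ (j, i)) =
      (if i = 0 then 0 else g (i - 1) * (?k (i - 1) * Y $$ (i - 1, i)))
      + (if i = d then 0 else g (i + 1) * (?k (i + 1) * Y $$ (i + 1, i)))"
    unfolding hollow_tridiagonal_left_mult[OF Y i] by (simp only: mult_ac)
  also have "\<dots> = ?k i * tridiag_mult_vec d Y g i"
  proof -
    have "(if i = 0 then 0 else g (i - 1) * (?k (i - 1) * Y $$ (i - 1, i)))
        = ?k i * (if i = 0 then 0 else Y $$ (i, i - 1) * g (i - 1))"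
      using lower by auto
    moreover have "(if i = d then 0 else g (i + 1) * (?k (i + 1) * Y $$ (i + 1, i)))
        = ?k i * (if i = d then 0 else Y $$ (i, i + 1) * g (i + 1))"
      using upper by auto
    ultimately show ?thesis
      unfolding tridiag_mult_vec_def by (simp add: distrib_left)
  qed
  finally show ?thesis .
qed

lemma tridiag_eigenvector_unique:
  fixes Y :: "'a::field mat"
  assumes b: "\<And>i. i < d \<Longrightarrow> Y $$ (i, i + 1) \<noteq> 0"
    and g: "\<And>i. i < d \<Longrightarrow> tridiag_mult_vec d Y g i = \<theta> * g i"
    and \<alpha>: "\<And>i. i < d \<Longrightarrow> tridiag_mult_vec d Y \<alpha> i = \<theta> * \<alpha> i" and \<alpha>0: "\<alpha> 0 = 1"
    and "j \<le> d"
  shows "g j = g 0 * \<alpha> j"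
  using \<open>j \<le> d\<close>
proof (induction j rule: less_induct)
  case (less j)
  show ?case
  proof (cases j)
    case 0
    then show ?thesis using \<alpha>0 by simp
  next
    case (Suc m)
    have "Y $$ (m, m + 1) * g (m + 1) = Y $$ (m, m + 1) * (g 0 * \<alpha> (m + 1))"
    proof (cases m)
      case 0
      have "Y $$ (0, 1) * g 1 = \<theta> * g 0" and "Y $$ (0, 1) * \<alpha> 1 = \<theta>"
        using g[of 0] \<alpha>[of 0] \<alpha>0 Suc less.prems 0 by (auto simp: tridiag_mult_vec_def)
      then show ?thesis
        using 0 by (simp add: algebra_simps)
    next
      case (Suc l)
      have g_step: "Y $$ (m, m + 1) * g (m + 1) = \<theta> * g m - Y $$ (m, l) * g l"
        and \<alpha>_step: "Y $$ (m, m + 1) * \<alpha> (m + 1) = \<theta> * \<alpha> m - Y $$ (m, l) * \<alpha> l"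
        using g[of m] \<alpha>[of m] Suc \<open>j = Suc m\<close> less.prems
        by (simp_all add: tridiag_mult_vec_def eq_diff_eq add.commute)
      have "g m = g 0 * \<alpha> m" and "g l = g 0 * \<alpha> l"
        using less.IH[of m] less.IH[of l] Suc \<open>j = Suc m\<close> less.prems by simp_all
      then have "Y $$ (m, m + 1) * g (m + 1) = g 0 * (\<theta> * \<alpha> m - Y $$ (m, l) * \<alpha> l)"
        unfolding g_step by (simp add: right_diff_distrib mult.left_commute)
      also have "\<dots> = g 0 * (Y $$ (m, m + 1) * \<alpha> (m + 1))"
        by (simp only: \<alpha>_step)
      finally show ?thesis
        by (simp only: mult.left_commute)
    qed
    then show ?thesis using b[of m] Suc less.prems by simp
  qed
qed

lemma tridiag_left_eigenvector:
  fixes Y :: "'a::field mat"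
  assumes Y: "hollow_tridiagonal (d+1) Y"
    and b: "\<And>i. i < d \<Longrightarrow> Y $$ (i, i + 1) \<noteq> 0" and c: "\<And>i. i < d \<Longrightarrow> Y $$ (i + 1, i) \<noteq> 0"
    and \<beta>: "\<And>i. i \<le> d \<Longrightarrow> (\<Sum>j<d+1. \<beta> j * Y $$ (j, i)) = \<theta> * \<beta> i"
    and \<alpha>: "\<And>i. i < d \<Longrightarrow> tridiag_mult_vec d Y \<alpha> i = \<theta> * \<alpha> i" and \<alpha>0: "\<alpha> 0 = 1"
    and j: "j \<le> d"
  shows "\<beta> j = \<beta> 0 * tridiag_weight Y j * \<alpha> j"
proof -
  let ?k = "tridiag_weight Y"
  define g where "g j = \<beta> j / ?k j" for j
  have \<beta>_eq: "\<beta> j = ?k j * g j" if "j \<le> d" for j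
    using tridiag_weight_nonzero[OF b c that] by (simp add: g_def)
  have "tridiag_mult_vec d Y g i = \<theta> * g i" if "i < d" for i
  proof -
    have "?k i * tridiag_mult_vec d Y g i = (\<Sum>j<d+1. ?k j * g j * Y $$ (j, i))"
      using tridiag_weight_left_mult[OF Y c] that by simp
    also have "\<dots> = (\<Sum>j<d+1. \<beta> j * Y $$ (j, i))"
      using \<beta>_eq by (intro sum.cong) auto
    also have "\<dots> = ?k i * (\<theta> * g i)"
      using \<beta>[of i] \<beta>_eq[of i] that by simp
    finally show ?thesis
      using tridiag_weight_nonzero[OF b c, of i] that by simp
  qed
  from tridiag_eigenvector_unique[OF b this \<alpha> \<alpha>0 j]
  have "g j = \<beta> 0 * \<alpha> j" by (simp add: g_def)
  then show ?thesis
    using \<beta>_eq[OF j] by simp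
qed

lemma tridiag_relation_left_to_right:
  fixes Y :: "'a::field mat"
  assumes Y: "hollow_tridiagonal (d+1) Y"
    and b: "\<And>i. i < d \<Longrightarrow> Y $$ (i, i + 1) \<noteq> 0" and c: "\<And>i. i < d \<Longrightarrow> Y $$ (i + 1, i) \<noteq> 0"
    and \<beta>: "\<And>j. j \<le> d \<Longrightarrow> \<beta> j = \<beta> 0 * tridiag_weight Y j * \<alpha> j" and "\<beta> 0 \<noteq> 0"
    and rel: "(\<Sum>j<d+1. f j * \<beta> j * Y $$ (j, i)) = r * \<beta> i" and i: "i \<le> d"
  shows "tridiag_mult_vec d Y (\<lambda>j. f j * \<alpha> j) i = r * \<alpha> i"
proof -
  have "\<beta> 0 * (tridiag_weight Y i * (r * \<alpha> i)) = (\<Sum>j<d+1. f j * \<beta> j * Y $$ (j, i))"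
    using rel \<beta>[OF i] by (simp add: mult_ac)
  also have "\<dots> = \<beta> 0 * (\<Sum>j<d+1. tridiag_weight Y j * (f j * \<alpha> j) * Y $$ (j, i))"
    unfolding sum_distrib_left
  proof (intro sum.cong refl)
    fix j assume "j \<in> {..<d+1}"
    then have "\<beta> j = \<beta> 0 * tridiag_weight Y j * \<alpha> j" by (intro \<beta>) auto
    then show "f j * \<beta> j * Y $$ (j, i) = \<beta> 0 * (tridiag_weight Y j * (f j * \<alpha> j) * Y $$ (j, i))"
      by (simp add: mult_ac)
  qed
  also have "\<dots> = \<beta> 0 * (tridiag_weight Y i * tridiag_mult_vec d Y (\<lambda>j. f j * \<alpha> j) i)"
    by (simp only: tridiag_weight_left_mult[OF Y c i])
  finally show ?thesis
    using \<open>\<beta> 0 \<noteq> 0\<close> tridiag_weight_nonzero[OF b c i] by simp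
qed

section \<open>Elimination along the tail\<close>

text \<open>Eliminating \<open>\<gamma>\<close> between the two rows makes \<open>(\<theta>\<^sup>*\<^sub>j - \<theta>\<^sup>*\<^sub>0)(\<theta>\<^sup>*\<^sub>j - \<theta>\<^sup>*\<^sub>1) \<beta>\<^sub>j\<close> a combination of
  the left eigenvectors \<open>\<delta>, \<gamma>, \<beta>\<close> (fact \<open>comb\<close>); after applying \<open>Y\<close>, the same two
  relations remove \<open>\<delta>\<close> and \<open>\<gamma>\<close> again.\<close>

lemma tail_left_relation:
  fixes Y :: "'a::field mat" and \<beta> \<gamma> \<delta> \<theta>s :: "nat \<Rightarrow> 'a"
  assumes row0: "\<And>j. j < n \<Longrightarrow> z00 * \<beta> j + z01 * \<gamma> j = \<theta>s j * \<beta> j"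
    and row1: "\<And>j. j < n \<Longrightarrow> z10 * \<beta> j + z11 * \<gamma> j + z12 * \<delta> j = \<theta>s j * \<gamma> j"
    and \<beta>: "\<And>i. i < n \<Longrightarrow> (\<Sum>j<n. \<beta> j * Y $$ (j, i)) = \<theta>0 * \<beta> i"
    and \<gamma>: "\<And>i. i < n \<Longrightarrow> (\<Sum>j<n. \<gamma> j * Y $$ (j, i)) = \<theta>1 * \<gamma> i"
    and \<delta>: "\<And>i. i < n \<Longrightarrow> (\<Sum>j<n. \<delta> j * Y $$ (j, i)) = \<theta>2 * \<delta> i"
    and \<psi>: "\<psi> = \<theta>s 1 + \<theta>s 0 - z11 - z00"
    and \<zeta>: "\<zeta> = z00 * z11 - z01 * z10 - \<theta>s 0 * \<theta>s 1"
    and i: "i < n"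
  shows "(\<Sum>j<n. (\<theta>s j - \<theta>s 0) * (\<theta>s j - \<theta>s 1) * \<beta> j * Y $$ (j, i))
    = (\<theta>2 * (\<theta>s i - \<theta>s 0) * (\<theta>s i - \<theta>s 1) + (\<theta>2 - \<theta>1) * \<psi> * \<theta>s i
       + (\<theta>1 - \<theta>0) * \<psi> * z00 + (\<theta>2 - \<theta>0) * \<zeta>) * \<beta> i"
proof -
  have comb: "(\<theta>s j - \<theta>s 0) * (\<theta>s j - \<theta>s 1) * \<beta> j
      = z01 * z12 * \<delta> j - \<psi> * z01 * \<gamma> j - (\<psi> * z00 + \<zeta>) * \<beta> j" if "j < n" for j
  proof -
    have "(\<theta>s j - \<theta>s 0) * (\<theta>s j - \<theta>s 1) * \<beta> j
        - (z01 * z12 * \<delta> j - \<psi> * z01 * \<gamma> j - (\<psi> * z00 + \<zeta>) * \<beta> j)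
      = (z11 - \<theta>s j + \<psi>) * (z00 * \<beta> j + z01 * \<gamma> j - \<theta>s j * \<beta> j)
        - z01 * (z10 * \<beta> j + z11 * \<gamma> j + z12 * \<delta> j - \<theta>s j * \<gamma> j)"
      unfolding \<psi> \<zeta> by (simp add: algebra_simps)
    then show ?thesis
      using row0[OF that] row1[OF that] by simp
  qed
  have "(\<Sum>j<n. (\<theta>s j - \<theta>s 0) * (\<theta>s j - \<theta>s 1) * \<beta> j * Y $$ (j, i))
      = (\<Sum>j<n. z01 * z12 * (\<delta> j * Y $$ (j, i)) - \<psi> * z01 * (\<gamma> j * Y $$ (j, i))
                 - (\<psi> * z00 + \<zeta>) * (\<beta> j * Y $$ (j, i)))"
    by (intro sum.cong refl, subst comb) (auto simp: algebra_simps)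
  also have "\<dots> = z01 * z12 * (\<theta>2 * \<delta> i) - \<psi> * z01 * (\<theta>1 * \<gamma> i) - (\<psi> * z00 + \<zeta>) * (\<theta>0 * \<beta> i)"
    by (simp only: sum_subtractf sum_distrib_left[symmetric] \<beta>[OF i] \<gamma>[OF i] \<delta>[OF i])
  also have "\<dots> = (\<theta>2 * (\<theta>s i - \<theta>s 0) * (\<theta>s i - \<theta>s 1) + (\<theta>2 - \<theta>1) * \<psi> * \<theta>s i
       + (\<theta>1 - \<theta>0) * \<psi> * z00 + (\<theta>2 - \<theta>0) * \<zeta>) * \<beta> i"
  proof -
    let ?D1 = "(\<theta>s i - \<theta>s 0) * (\<theta>s i - \<theta>s 1) * \<beta> i
      - (z01 * z12 * \<delta> i - \<psi> * z01 * \<gamma> i - (\<psi> * z00 + \<zeta>) * \<beta> i)"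
    let ?D2 = "z00 * \<beta> i + z01 * \<gamma> i - \<theta>s i * \<beta> i"
    have "z01 * z12 * (\<theta>2 * \<delta> i) - \<psi> * z01 * (\<theta>1 * \<gamma> i) - (\<psi> * z00 + \<zeta>) * (\<theta>0 * \<beta> i)
        - (\<theta>2 * (\<theta>s i - \<theta>s 0) * (\<theta>s i - \<theta>s 1) + (\<theta>2 - \<theta>1) * \<psi> * \<theta>s i
           + (\<theta>1 - \<theta>0) * \<psi> * z00 + (\<theta>2 - \<theta>0) * \<zeta>) * \<beta> i
      = (\<theta>2 - \<theta>1) * \<psi> * ?D2 - \<theta>2 * ?D1"
      by (simp add: algebra_simps)
    moreover have "?D1 = 0" and "?D2 = 0"
      using comb[OF i] row0[OF i] by simp_all
    ultimately show ?thesis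
      by simp
  qed
  finally show ?thesis .
qed

lemma dual_recurrence_from_intertwiner:
  fixes N Y Z :: "'a::field mat" and \<theta> \<theta>s \<alpha> :: "nat \<Rightarrow> 'a"
  assumes d: "2 \<le> d"
    and carr: "N \<in> carrier_mat (d+1) (d+1)" "Y \<in> carrier_mat (d+1) (d+1)" "Z \<in> carrier_mat (d+1) (d+1)"
    and NY: "N * Y = mat_diag (d+1) \<theta> * N" and ZN: "Z * N = N * mat_diag (d+1) \<theta>s"
    and N0: "\<exists>j<d+1. N $$ (0, j) \<noteq> 0"
    and Z0: "\<And>j. 2 \<le> j \<Longrightarrow> j \<le> d \<Longrightarrow> Z $$ (0, j) = 0"
    and Z1: "\<And>j. 3 \<le> j \<Longrightarrow> j \<le> d \<Longrightarrow> Z $$ (1, j) = 0"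
    and Y: "hollow_tridiagonal (d+1) Y"
    and b: "\<And>i. i < d \<Longrightarrow> Y $$ (i, i + 1) \<noteq> 0" and c: "\<And>i. i < d \<Longrightarrow> Y $$ (i + 1, i) \<noteq> 0"
    and \<alpha>: "\<And>i. i < d \<Longrightarrow> tridiag_mult_vec d Y \<alpha> i = \<theta> 0 * \<alpha> i" and \<alpha>0: "\<alpha> 0 = 1"
    and \<psi>: "\<psi> = \<theta>s 1 + \<theta>s 0 - Z $$ (1, 1) - Z $$ (0, 0)"
    and \<zeta>: "\<zeta> = Z $$ (0, 0) * Z $$ (1, 1) - Z $$ (0, 1) * Z $$ (1, 0) - \<theta>s 0 * \<theta>s 1"
    and i: "i \<le> d"
  shows "tridiag_mult_vec d Y (\<lambda>j. (\<theta>s j - \<theta>s 0) * (\<theta>s j - \<theta>s 1) * \<alpha> j) i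
    = (\<theta> 2 * (\<theta>s i - \<theta>s 0) * (\<theta>s i - \<theta>s 1) + (\<theta> 2 - \<theta> 1) * \<psi> * \<theta>s i
       + (\<theta> 1 - \<theta> 0) * \<psi> * Z $$ (0, 0) + (\<theta> 2 - \<theta> 0) * \<zeta>) * \<alpha> i"
proof -
  have left_eigen: "(\<Sum>j<d+1. N $$ (l, j) * Y $$ (j, i)) = \<theta> l * N $$ (l, i)"
    if "l < d + 1" "i < d + 1" for l i
  proof -
    have "(N * Y) $$ (l, i) = (mat_diag (d+1) \<theta> * N) $$ (l, i)"
      by (simp only: NY)
    then show ?thesis
      using that carr unfolding mat_diag_mult_left[OF carr(1)]
      by (simp add: scalar_prod_def atLeast0LessThan)
  qed
  have right_eigen: "(\<Sum>k<d+1. Z $$ (l, k) * N $$ (k, j)) = \<theta>s j * N $$ (l, j)"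
    if "l < d + 1" "j < d + 1" for l j
  proof -
    have "(Z * N) $$ (l, j) = (N * mat_diag (d+1) \<theta>s) $$ (l, j)"
      by (simp only: ZN)
    then show ?thesis
      using that carr unfolding mat_diag_mult_right[OF carr(1)]
      by (simp add: scalar_prod_def atLeast0LessThan mult.commute)
  qed
  have row0: "Z $$ (0, 0) * N $$ (0, j) + Z $$ (0, 1) * N $$ (1, j) = \<theta>s j * N $$ (0, j)"
    if "j < d + 1" for j
  proof -
    have "(\<Sum>k<d+1. Z $$ (0, k) * N $$ (k, j)) = (\<Sum>k\<in>{0, 1}. Z $$ (0, k) * N $$ (k, j))"
      using d Z0 by (intro sum.mono_neutral_right) auto
    then show ?thesis
      using right_eigen[of 0 j] that by simp
  qed
  have row1: "Z $$ (1, 0) * N $$ (0, j) + Z $$ (1, 1) * N $$ (1, j) + Z $$ (1, 2) * N $$ (2, j)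
      = \<theta>s j * N $$ (1, j)" if "j < d + 1" for j
  proof -
    have "(\<Sum>k<d+1. Z $$ (1, k) * N $$ (k, j)) = (\<Sum>k\<in>{0, 1, 2}. Z $$ (1, k) * N $$ (k, j))"
      using d Z1 by (intro sum.mono_neutral_right) auto
    then show ?thesis
      using right_eigen[of 1 j] that d by (simp add: add.assoc)
  qed
  have rel: "(\<Sum>j<d+1. (\<theta>s j - \<theta>s 0) * (\<theta>s j - \<theta>s 1) * N $$ (0, j) * Y $$ (j, i))
    = (\<theta> 2 * (\<theta>s i - \<theta>s 0) * (\<theta>s i - \<theta>s 1) + (\<theta> 2 - \<theta> 1) * \<psi> * \<theta>s i
       + (\<theta> 1 - \<theta> 0) * \<psi> * Z $$ (0, 0) + (\<theta> 2 - \<theta> 0) * \<zeta>) * N $$ (0, i)"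
    by (rule tail_left_relation[OF row0 row1 left_eigen left_eigen left_eigen \<psi> \<zeta>]) (use d i in auto)
  have \<beta>: "N $$ (0, j) = N $$ (0, 0) * tridiag_weight Y j * \<alpha> j" if "j \<le> d" for j
    by (rule tridiag_left_eigenvector[OF Y b c _ \<alpha> \<alpha>0 that]) (use left_eigen in auto)
  have "N $$ (0, 0) \<noteq> 0"
    using N0 \<beta> by force
  from tridiag_relation_left_to_right[OF Y b c \<beta> this rel i]
  show ?thesis by simp
qed

section \<open>Coordinate projections and similar matrices\<close>

definition coord_proj :: "nat \<Rightarrow> nat \<Rightarrow> 'a::semiring_1 mat" where
  "coord_proj n i = mat_diag n (\<lambda>k. if k = i then 1 else 0)"

lemma coord_proj_carrier [simp]: "coord_proj n i \<in> carrier_mat n n"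
  by (simp add: coord_proj_def)

lemma mat_diag_mult_coord_proj:
  "mat_diag n f * coord_proj n i = f i \<cdot>\<^sub>m coord_proj n i"
  unfolding coord_proj_def mat_diag_diag by (auto simp: mat_diag_def intro!: eq_matI)

lemma coord_proj_mult_mult_coord_proj_eq_0_iff:
  fixes Y :: "'a::semiring_1 mat"
  assumes "Y \<in> carrier_mat n n" and "i < n" and "j < n"
  shows "coord_proj n i * Y * coord_proj n j = 0\<^sub>m n n \<longleftrightarrow> Y $$ (i, j) = 0"
proof -
  have entries: "coord_proj n i * Y * coord_proj n j
      = mat n n (\<lambda>(r, s). (if r = i then 1 else 0) * Y $$ (r, s) * (if s = j then 1 else 0))"
    using assms(1) unfolding coord_proj_def
    by (auto simp: mat_diag_mult_left[of _ n n] mat_diag_mult_right[of _ n n] intro!: eq_matI)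
  have entry: "(coord_proj n i * Y * coord_proj n j) $$ (i, j) = Y $$ (i, j)"
    using assms(2,3) unfolding entries by simp
  show ?thesis
  proof
    assume "coord_proj n i * Y * coord_proj n j = 0\<^sub>m n n"
    with entry show "Y $$ (i, j) = 0"
      using assms(2,3) by simp
  qed (auto simp: entries intro!: eq_matI)
qed

lemma mat_trace_coord_proj_mult:
  fixes Y :: "'a::comm_ring_1 mat"
  assumes "Y \<in> carrier_mat n n" and "i < n"
  shows "mat_trace (coord_proj n i * Y) = Y $$ (i, i)"
proof -
  have "mat_trace (coord_proj n i * Y) = (\<Sum>r<n. if r = i then Y $$ (i, i) else 0)"
    using assms unfolding mat_trace_def coord_proj_def
    by (intro sum.cong) (auto simp: mat_diag_mult_left[of _ n n])
  also have "\<dots> = Y $$ (i, i)"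
    using assms(2) by simp
  finally show ?thesis .
qed

lemma mat_trace_mult_comm:
  fixes X :: "'a::comm_ring_1 mat"
  assumes "X \<in> carrier_mat n m" and "Y \<in> carrier_mat m n"
  shows "mat_trace (X * Y) = mat_trace (Y * X)"
proof -
  have "mat_trace (X * Y) = (\<Sum>r<n. \<Sum>k<m. X $$ (r, k) * Y $$ (k, r))"
    using assms unfolding mat_trace_def
    by (intro sum.cong) (auto simp: scalar_prod_def atLeast0LessThan)
  also have "\<dots> = (\<Sum>k<m. \<Sum>r<n. Y $$ (k, r) * X $$ (r, k))"
    by (subst sum.swap) (simp add: mult.commute)
  also have "\<dots> = mat_trace (Y * X)"
    using assms unfolding mat_trace_def
    by (intro sum.cong) (auto simp: scalar_prod_def atLeast0LessThan)
  finally show ?thesis .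
qed

lemma similar_mat_witI_intertwining:
  assumes carr: "{X, X', P, G} \<subseteq> carrier_mat n n" and PG: "P * G = 1\<^sub>m n" and GP: "G * P = 1\<^sub>m n"
    and XP: "X * P = P * X'"
  shows "similar_mat_wit X X' P G"
proof (rule similar_mat_witI[OF PG GP])
  from carr have [simp]: "X \<in> carrier_mat n n" "X' \<in> carrier_mat n n" "P \<in> carrier_mat n n"
    "G \<in> carrier_mat n n" by auto
  have "X = X * (P * G)"
    unfolding PG by (simp add: right_mult_one_mat[of _ n n])
  also have "\<dots> = P * X' * G"
    by (simp add: assoc_mult_mat[of _ n n _ n _ n, symmetric] XP)
  finally show "X = P * X' * G" .
qed (use carr in auto)

lemma similar_mat_wit_intertwines:
  assumes "similar_mat_wit A B P Q"
  shows "A * P = P * B" and "Q * A = B * Q"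
proof -
  obtain n where carr: "{A, B, P, Q} \<subseteq> carrier_mat n n" and QP: "Q * P = 1\<^sub>m n"
    and A: "A = P * B * Q"
    using similar_mat_witD[OF refl assms] by blast
  from carr have [simp]: "B \<in> carrier_mat n n" "P \<in> carrier_mat n n" "Q \<in> carrier_mat n n" by auto
  note assoc = assoc_mult_mat[of _ n n _ n _ n] mult_carrier_mat[of _ n n _ n]
  have "A * P = P * B * (Q * P)"
    unfolding A by (simp add: assoc)
  then show "A * P = P * B"
    unfolding QP by (simp add: right_mult_one_mat[of _ n n] mult_carrier_mat[of _ n n _ n])
  have "Q * A = (Q * P) * B * Q"
    unfolding A by (simp add: assoc)
  then show "Q * A = B * Q"
    unfolding QP by (simp add: left_mult_one_mat[of _ n n])
qed

lemma similar_mat_wit_mult: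
  assumes AB: "similar_mat_wit A B P Q" and CD: "similar_mat_wit C D P Q"
    and "A \<in> carrier_mat n n" and "C \<in> carrier_mat n n"
  shows "similar_mat_wit (A * C) (B * D) P Q"
proof -
  note AB' = similar_mat_witD2[OF assms(3) AB] and CD' = similar_mat_witD2[OF assms(4) CD]
  note [simp] = AB'(4-7) CD'(5)
  note assoc = assoc_mult_mat[of _ n n _ n _ n] mult_carrier_mat[of _ n n _ n]
  have "A * C = P * B * (Q * P) * D * Q"
    unfolding AB'(3) CD'(3) by (simp add: assoc)
  also have "\<dots> = P * (B * D) * Q"
    unfolding AB'(2) by (simp add: assoc right_mult_one_mat[of _ n n])
  finally show ?thesis
    by (intro similar_mat_witI[OF AB'(1,2)]) (auto simp: assoc)
qed

lemma similar_mat_wit_eq_0_iff: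
  assumes wit: "similar_mat_wit A B P Q" and "A \<in> carrier_mat n n"
  shows "A = 0\<^sub>m n n \<longleftrightarrow> B = 0\<^sub>m n n"
proof -
  note carr = similar_mat_witD2[OF assms(2) wit]
  have "Q * A * P = B * (Q * P)"
    using similar_mat_wit_intertwines(2)[OF wit] carr by (simp add: assoc_mult_mat[of _ n n _ n _ n])
  then have "Q * A * P = B"
    using carr by (simp add: right_mult_one_mat[of _ n n])
  then show ?thesis
    using carr by auto
qed

lemma mat_trace_similar:
  assumes wit: "similar_mat_wit A B P Q"
  shows "mat_trace A = mat_trace B"
proof -
  obtain n where carr: "{A, B, P, Q} \<subseteq> carrier_mat n n" and QP: "Q * P = 1\<^sub>m n" and A: "A = P * B * Q"
    using similar_mat_witD[OF refl wit] by blast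
  from carr have [simp]: "B \<in> carrier_mat n n" "P \<in> carrier_mat n n" "Q \<in> carrier_mat n n" by auto
  have "mat_trace A = mat_trace (Q * (P * B))"
    unfolding A by (intro mat_trace_mult_comm[of _ n n] mult_carrier_mat[of _ n n]) auto
  also have "\<dots> = mat_trace B"
    by (simp add: assoc_mult_mat[of _ n n _ n _ n, symmetric] QP left_mult_one_mat[of _ n n])
  finally show ?thesis .
qed

lemma mat_mult_eq_one_row_nonzero:
  fixes N :: "'a::field mat"
  assumes "N \<in> carrier_mat n n" and "M \<in> carrier_mat n n" and "N * M = 1\<^sub>m n" and "l < n"
  shows "\<exists>j<n. N $$ (l, j) \<noteq> 0"
proof (rule ccontr)
  assume "\<not> ?thesis"
  then have "(N * M) $$ (l, l) = 0"
    using assms(1,2,4) by (simp add: scalar_prod_def)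
  then show False
    using assms(3,4) by simp
qed

lemma similar_coord_proj_sandwich_eq_0_iff:
  assumes F: "similar_mat_wit F (coord_proj n i) P Q" and M: "similar_mat_wit M Y P Q"
    and F': "similar_mat_wit F' (coord_proj n j) P Q"
    and carr: "F \<in> carrier_mat n n" "M \<in> carrier_mat n n" "F' \<in> carrier_mat n n"
    and "i < n" and "j < n"
  shows "F * M * F' = 0\<^sub>m n n \<longleftrightarrow> Y $$ (i, j) = 0"
proof -
  have "similar_mat_wit (F * M * F') (coord_proj n i * Y * coord_proj n j) P Q"
    using carr by (intro similar_mat_wit_mult[OF similar_mat_wit_mult[OF F M]] F') (auto intro: mult_carrier_mat)
  then have "F * M * F' = 0\<^sub>m n n \<longleftrightarrow> coord_proj n i * Y * coord_proj n j = 0\<^sub>m n n"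
    using carr by (intro similar_mat_wit_eq_0_iff) (auto intro: mult_carrier_mat)
  also have "\<dots> \<longleftrightarrow> Y $$ (i, j) = 0"
    using similar_mat_witD2[OF carr(2) M] assms(7,8) by (intro coord_proj_mult_mult_coord_proj_eq_0_iff) auto
  finally show ?thesis .
qed

lemma similar_coord_proj_trace:
  assumes F: "similar_mat_wit F (coord_proj n i) P Q" and M: "similar_mat_wit M Y P Q"
    and carr: "F \<in> carrier_mat n n" "M \<in> carrier_mat n n" and "i < n"
  shows "mat_trace (F * M) = Y $$ (i, i)"
proof -
  have "mat_trace (F * M) = mat_trace (coord_proj n i * Y)"
    by (rule mat_trace_similar[OF similar_mat_wit_mult[OF F M carr]])
  also have "\<dots> = Y $$ (i, i)"
    using similar_mat_witD2[OF carr(2) M] assms(5) by (intro mat_trace_coord_proj_mult) auto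
  finally show ?thesis .
qed

lemma similar_coord_proj_hollow_tridiagonal:
  assumes F: "\<And>i. i < n \<Longrightarrow> similar_mat_wit (F i) (coord_proj n i) P Q" and M: "similar_mat_wit M Y P Q"
    and F_carr: "\<And>i. i < n \<Longrightarrow> F i \<in> carrier_mat n n" and M_carr: "M \<in> carrier_mat n n"
    and far: "\<And>i j. i < n \<Longrightarrow> j < n \<Longrightarrow> i + 1 < j \<or> j + 1 < i \<Longrightarrow> F i * M * F j = 0\<^sub>m n n"
    and traceless: "\<And>i. i < n \<Longrightarrow> mat_trace (F i * M) = 0"
  shows "hollow_tridiagonal n Y"
  unfolding hollow_tridiagonal_def
proof (intro allI impI)
  fix i j assume i: "i < n" and j: "j < n" and "i + 1 \<noteq> j \<and> j + 1 \<noteq> i"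
  then consider "i = j" | "i + 1 < j \<or> j + 1 < i"
    by linarith
  then show "Y $$ (i, j) = 0"
  proof cases
    case 1
    then show ?thesis
      using similar_coord_proj_trace[OF F[OF i] M F_carr[OF i] M_carr i] traceless[OF i] by simp
  next
    case 2
    then show ?thesis
      using similar_coord_proj_sandwich_eq_0_iff[OF F[OF i] M F[OF j] F_carr[OF i] M_carr F_carr[OF j] i j]
        far[OF i j] by simp
  qed
qed

section \<open>Bases adapted to a family of projections\<close>

lemma basis_mat_carrier [simp]: "basis_mat n u \<in> carrier_mat n n"
  by (simp add: basis_mat_def)

lemma basis_mat_dim [simp]: "dim_row (basis_mat n u) = n" "dim_col (basis_mat n u) = n"
  by (simp_all add: basis_mat_def)

lemma col_basis_mat: "j < n \<Longrightarrow> u j \<in> carrier_vec n \<Longrightarrow> col (basis_mat n u) j = u j"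
  by (auto simp: basis_mat_def intro!: eq_vecI)

lemma mult_basis_mat_eigenvectors:
  fixes M :: "'a::comm_ring_1 mat"
  assumes M: "M \<in> carrier_mat n n" and u: "\<And>s. s < n \<Longrightarrow> u s \<in> carrier_vec n"
    and Mu: "\<And>s. s < n \<Longrightarrow> M *\<^sub>v u s = f s \<cdot>\<^sub>v u s"
  shows "M * basis_mat n u = basis_mat n u * mat_diag n f"
proof (rule eq_matI)
  fix r s assume "r < dim_row (basis_mat n u * mat_diag n f)" "s < dim_col (basis_mat n u * mat_diag n f)"
  then have r: "r < n" and s: "s < n" by (auto simp: mat_diag_def)
  have "(M * basis_mat n u) $$ (r, s) = (M *\<^sub>v u s) $ r"
    using M r s u by (simp add: col_basis_mat)
  also have "\<dots> = (basis_mat n u * mat_diag n f) $$ (r, s)"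
    using Mu[OF s] u[OF s] r s by (simp add: mat_diag_mult_right[of _ n n] basis_mat_def)
  finally show "(M * basis_mat n u) $$ (r, s) = (basis_mat n u * mat_diag n f) $$ (r, s)" .
qed (use M in \<open>auto simp: mat_diag_def\<close>)

lemma mult_basis_mat_projection:
  fixes F :: "'a::comm_ring_1 mat"
  assumes F: "F \<in> carrier_mat n n" and u: "\<And>s. s < n \<Longrightarrow> u s \<in> carrier_vec n"
    and Fu: "\<And>s. s < n \<Longrightarrow> F *\<^sub>v u s = (if s = i then u s else 0\<^sub>v n)"
  shows "F * basis_mat n u = basis_mat n u * coord_proj n i"
  unfolding coord_proj_def
proof (rule mult_basis_mat_eigenvectors[OF F u])
  fix s assume "s < n"
  then show "F *\<^sub>v u s = (if s = i then 1 else 0) \<cdot>\<^sub>v u s"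
    using Fu[OF \<open>s < n\<close>] u[OF \<open>s < n\<close>] by (auto intro!: eq_vecI)
qed

lemma mult_coord_proj_mult_vec:
  fixes B :: "'a::comm_ring_1 mat"
  assumes "B \<in> carrier_mat n n" and "c \<in> carrier_vec n" and "i < n"
  shows "(B * coord_proj n i) *\<^sub>v c = c $ i \<cdot>\<^sub>v col B i"
proof (rule eq_vecI)
  fix r assume "r < dim_vec (c $ i \<cdot>\<^sub>v col B i)"
  then have r: "r < n" using assms(1) by simp
  have "((B * coord_proj n i) *\<^sub>v c) $ r = (\<Sum>s<n. B $$ (r, s) * (if s = i then 1 else 0) * c $ s)"
    using assms r unfolding coord_proj_def
    by (simp add: mat_diag_mult_right[of _ n n] scalar_prod_def atLeast0LessThan)
  also have "\<dots> = (\<Sum>s<n. if s = i then B $$ (r, i) * c $ i else 0)"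
    by (intro sum.cong) auto
  also have "\<dots> = (c $ i \<cdot>\<^sub>v col B i) $ r"
    using assms r by simp
  finally show "((B * coord_proj n i) *\<^sub>v c) $ r = (c $ i \<cdot>\<^sub>v col B i) $ r" .
qed (use assms in auto)

lemma basis_mat_invertible:
  fixes u :: "nat \<Rightarrow> 'a::field vec"
  assumes u: "\<And>s. s < n \<Longrightarrow> u s \<in> carrier_vec n" and nz: "\<And>s. s < n \<Longrightarrow> u s \<noteq> 0\<^sub>v n"
    and F: "\<And>i. i < n \<Longrightarrow> F i \<in> carrier_mat n n"
    and Fu: "\<And>i s. i < n \<Longrightarrow> s < n \<Longrightarrow> F i *\<^sub>v u s = (if s = i then u s else 0\<^sub>v n)"
  obtains G where "G \<in> carrier_mat n n" "basis_mat n u * G = 1\<^sub>m n" "G * basis_mat n u = 1\<^sub>m n"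
proof -
  let ?B = "basis_mat n u"
  have "det ?B \<noteq> 0"
  proof
    assume "det ?B = 0"
    then obtain c where c: "c \<in> carrier_vec n" "c \<noteq> 0\<^sub>v n" and Bc: "?B *\<^sub>v c = 0\<^sub>v n"
      using det_0_iff_vec_prod_zero_field[OF basis_mat_carrier] by blast
    have "c $ i = 0" if i: "i < n" for i
    proof -
      have "c $ i \<cdot>\<^sub>v u i = (?B * coord_proj n i) *\<^sub>v c"
        using mult_coord_proj_mult_vec[OF basis_mat_carrier c(1) i] col_basis_mat[of i n u] i u[OF i] by simp
      also have "\<dots> = (F i * ?B) *\<^sub>v c"
        using mult_basis_mat_projection[OF F[OF i] u Fu[OF i]] by simp
      also have "\<dots> = F i *\<^sub>v (?B *\<^sub>v c)"
        by (rule assoc_mult_mat_vec[OF F[OF i] basis_mat_carrier c(1)])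
      finally have "c $ i \<cdot>\<^sub>v u i = 0\<^sub>v n"
        using Bc F[OF i] by auto
      moreover obtain r where "r < n" "u i $ r \<noteq> 0"
        using nz[OF i] u[OF i] by (metis eq_vecI carrier_vecD index_zero_vec)
      ultimately show "c $ i = 0"
        by (metis index_smult_vec(1) index_zero_vec(1) mult_eq_0_iff u[OF i] carrier_vecD)
    qed
    then have "c = 0\<^sub>v n"
      using c(1) by (intro eq_vecI) auto
    with c(2) show False ..
  qed
  then have "?B \<in> Units (ring_mat TYPE('a) n ())"
    by (rule det_non_zero_imp_unit[OF basis_mat_carrier])
  then obtain G where G: "G \<in> carrier_mat n n" and "G * ?B = 1\<^sub>m n"
    unfolding Units_def ring_mat_def by auto
  moreover have "?B * G = 1\<^sub>m n"
    by (rule mat_mult_left_right_inverse[OF G basis_mat_carrier]) fact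
  ultimately show ?thesis
    using that by blast
qed

lemma adapted_basis_similarity:
  fixes u :: "nat \<Rightarrow> 'a::field vec"
  assumes u: "\<And>s. s < n \<Longrightarrow> u s \<in> carrier_vec n" and nz: "\<And>s. s < n \<Longrightarrow> u s \<noteq> 0\<^sub>v n"
    and F: "\<And>i. i < n \<Longrightarrow> F i \<in> carrier_mat n n"
    and Fu: "\<And>i s. i < n \<Longrightarrow> s < n \<Longrightarrow> F i *\<^sub>v u s = (if s = i then u s else 0\<^sub>v n)"
  obtains G where "\<And>i. i < n \<Longrightarrow> similar_mat_wit (F i) (coord_proj n i) (basis_mat n u) G"
    and "\<And>X X'. X \<in> carrier_mat n n \<Longrightarrow> X' \<in> carrier_mat n n \<Longrightarrow>
      X * basis_mat n u = basis_mat n u * X' \<Longrightarrow> similar_mat_wit X X' (basis_mat n u) G"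
proof -
  obtain G where G: "G \<in> carrier_mat n n" "basis_mat n u * G = 1\<^sub>m n" "G * basis_mat n u = 1\<^sub>m n"
    using basis_mat_invertible[OF u nz F Fu] by blast
  have sim: "similar_mat_wit X X' (basis_mat n u) G"
    if "X \<in> carrier_mat n n" "X' \<in> carrier_mat n n" "X * basis_mat n u = basis_mat n u * X'" for X X'
    using that G by (intro similar_mat_witI_intertwining) auto
  show thesis
  proof (rule that)
    show "similar_mat_wit (F i) (coord_proj n i) (basis_mat n u) G" if "i < n" for i
      using that F u Fu by (intro sim mult_basis_mat_projection) auto
  qed (fact sim)
qed

lemma lin_comb_mat_mult_vec:
  assumes K: "finite K" "j \<in> K" and M: "\<And>k. k \<in> K \<Longrightarrow> M k \<in> carrier_mat n n"
    and x: "x \<in> carrier_vec n"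
    and Mx: "\<And>k. k \<in> K \<Longrightarrow> M k *\<^sub>v x = (if k = j then x else 0\<^sub>v n)"
  shows "lin_comb_mat n c M K *\<^sub>v x = c j \<cdot>\<^sub>v x"
proof (rule eq_vecI)
  fix r assume "r < dim_vec (c j \<cdot>\<^sub>v x)"
  then have r: "r < n" using x by simp
  have "(lin_comb_mat n c M K *\<^sub>v x) $ r = (\<Sum>s<n. (\<Sum>k\<in>K. c k * M k $$ (r, s)) * x $ s)"
    using r x unfolding lin_comb_mat_def by (simp add: scalar_prod_def atLeast0LessThan)
  also have "\<dots> = (\<Sum>k\<in>K. c k * (\<Sum>s<n. M k $$ (r, s) * x $ s))"
    by (simp add: sum_distrib_left sum_distrib_right mult.assoc sum.swap[of _ K])
  also have "\<dots> = (\<Sum>k\<in>K. c k * (M k *\<^sub>v x) $ r)"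
  proof (intro sum.cong refl)
    fix k assume "k \<in> K"
    then show "c k * (\<Sum>s<n. M k $$ (r, s) * x $ s) = c k * (M k *\<^sub>v x) $ r"
      using r M[of k] x by (simp add: scalar_prod_def atLeast0LessThan)
  qed
  also have "\<dots> = (\<Sum>k\<in>K. if k = j then c j * x $ r else 0)"
    using r by (intro sum.cong) (auto simp: Mx)
  also have "\<dots> = (c j \<cdot>\<^sub>v x) $ r"
    using K r x by simp
  finally show "(lin_comb_mat n c M K *\<^sub>v x) $ r = (c j \<cdot>\<^sub>v x) $ r" .
qed (use x in \<open>simp add: lin_comb_mat_def\<close>)

lemma orthogonal_projection_mult_vec:
  assumes "F * E = 0\<^sub>m n n" and "F \<in> carrier_mat n n" and "E \<in> carrier_mat n n"
    and "x \<in> carrier_vec n" and "E *\<^sub>v x = x"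
  shows "F *\<^sub>v x = 0\<^sub>v n"
proof -
  have "F *\<^sub>v x = (F * E) *\<^sub>v x"
    using assms(2-5) by simp
  then show ?thesis
    using assms(1,4) by auto
qed

lemma eigenprojection_fixed_imp_eigenvector:
  fixes A :: "'a::field mat"
  assumes A: "A \<in> carrier_mat n n" and eig: "\<And>l. l < n \<Longrightarrow> eigenvalue A (\<theta> l)"
    and E: "\<And>i. i < n \<Longrightarrow> E i \<in> carrier_mat n n"
    and on: "\<And>i x. i < n \<Longrightarrow> x \<in> carrier_vec n \<Longrightarrow> A *\<^sub>v x = \<theta> i \<cdot>\<^sub>v x \<Longrightarrow> E i *\<^sub>v x = x"
    and off: "\<And>i j x. i < n \<Longrightarrow> j < n \<Longrightarrow> j \<noteq> i \<Longrightarrow> x \<in> carrier_vec n \<Longrightarrow>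
      A *\<^sub>v x = \<theta> j \<cdot>\<^sub>v x \<Longrightarrow> E i *\<^sub>v x = 0\<^sub>v n"
    and i: "i < n" and x: "x \<in> carrier_vec n" and Ex: "E i *\<^sub>v x = x"
  shows "A *\<^sub>v x = \<theta> i \<cdot>\<^sub>v x"
proof -
  \<comment> \<open>in an eigenbasis of \<open>A\<close> the \<open>E i\<close> become coordinate projections, so \<open>A E\<^sub>i = \<theta>\<^sub>i E\<^sub>i\<close>\<close>
  obtain e where "\<And>l. l < n \<Longrightarrow> eigenvector A (e l) (\<theta> l)"
    using eig unfolding eigenvalue_def by metis
  then have e: "e l \<in> carrier_vec n" "e l \<noteq> 0\<^sub>v n" "A *\<^sub>v e l = \<theta> l \<cdot>\<^sub>v e l" if "l < n" for l
    using A that unfolding eigenvector_def by auto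
  have Ee: "E k *\<^sub>v e s = (if s = k then e s else 0\<^sub>v n)" if "k < n" "s < n" for k s
    using on[of k "e s"] off[of k s "e s"] e[of s] that by auto
  obtain G where E_sim: "\<And>k. k < n \<Longrightarrow> similar_mat_wit (E k) (coord_proj n k) (basis_mat n e) G"
    and sim: "\<And>X X'. X \<in> carrier_mat n n \<Longrightarrow> X' \<in> carrier_mat n n \<Longrightarrow>
      X * basis_mat n e = basis_mat n e * X' \<Longrightarrow> similar_mat_wit X X' (basis_mat n e) G"
    by (rule adapted_basis_similarity[of n e E]) (use e E Ee in auto)
  have "similar_mat_wit A (mat_diag n \<theta>) (basis_mat n e) G"
    using A e by (intro sim mult_basis_mat_eigenvectors) auto
  moreover note Ei = E_sim[OF i]
  ultimately have "similar_mat_wit (A * E i) (mat_diag n \<theta> * coord_proj n i) (basis_mat n e) G"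
    by (rule similar_mat_wit_mult[OF _ _ A E[OF i]])
  then have "similar_mat_wit (A * E i) (\<theta> i \<cdot>\<^sub>m coord_proj n i) (basis_mat n e) G"
    by (simp only: mat_diag_mult_coord_proj)
  moreover have "similar_mat_wit (\<theta> i \<cdot>\<^sub>m E i) (\<theta> i \<cdot>\<^sub>m coord_proj n i) (basis_mat n e) G"
    by (rule similar_mat_wit_smult[OF Ei])
  ultimately have AE: "A * E i = \<theta> i \<cdot>\<^sub>m E i"
    using similar_mat_witD(3)[OF refl] by metis
  have "A *\<^sub>v x = (A * E i) *\<^sub>v x"
    using A E[OF i] x Ex by simp
  also have "\<dots> = \<theta> i \<cdot>\<^sub>v (E i *\<^sub>v x)"
    unfolding AE using E[OF i] x
    by (intro eq_vecI) (auto simp: scalar_prod_def sum_distrib_left mult.assoc)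
  finally show ?thesis
    using Ex by simp
qed

theorem proposition8p2:
  fixes d :: nat
    and Est E :: "nat \<Rightarrow> 'a::field mat"
    and A As :: "'a mat"
    and \<theta> \<theta>s \<alpha> :: "nat \<Rightarrow> 'a"
    and v w :: "nat \<Rightarrow> 'a vec"
    and Y Z :: "'a mat"
  assumes d3: "d \<ge> 3"
    and Est_carrier: "\<And>i. i \<le> d \<Longrightarrow> Est i \<in> carrier_mat (d+1) (d+1)"
    and Est_orth: "\<And>i j. i \<le> d \<Longrightarrow> j \<le> d \<Longrightarrow>
                     Est i * Est j = (if i = j then Est i else 0\<^sub>m (d+1) (d+1))"
    and Est_rank: "\<And>i. i \<le> d \<Longrightarrow> vec_space.rank (d+1) (Est i) = 1"
    and A_carrier: "A \<in> carrier_mat (d+1) (d+1)"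
    and A_tri0: "\<And>i j. i \<le> d \<Longrightarrow> j \<le> d \<Longrightarrow> i + 1 < j \<or> j + 1 < i \<Longrightarrow>
                   Est i * A * Est j = 0\<^sub>m (d+1) (d+1)"
    and A_tri1: "\<And>i j. i \<le> d \<Longrightarrow> j \<le> d \<Longrightarrow> i = j + 1 \<or> j = i + 1 \<Longrightarrow>
                   Est i * A * Est j \<noteq> 0\<^sub>m (d+1) (d+1)"
    and theta_distinct: "\<And>i j. i \<le> d \<Longrightarrow> j \<le> d \<Longrightarrow> \<theta> i = \<theta> j \<Longrightarrow> i = j"
    and theta_eig: "\<And>i. i \<le> d \<Longrightarrow> eigenvalue A (\<theta> i)"
    and E_carrier: "\<And>i. i \<le> d \<Longrightarrow> E i \<in> carrier_mat (d+1) (d+1)"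
    and E_on: "\<And>i x. i \<le> d \<Longrightarrow> x \<in> carrier_vec (d+1) \<Longrightarrow> A *\<^sub>v x = \<theta> i \<cdot>\<^sub>v x \<Longrightarrow>
                 E i *\<^sub>v x = x"
    and E_off: "\<And>i j x. i \<le> d \<Longrightarrow> j \<le> d \<Longrightarrow> j \<noteq> i \<Longrightarrow> x \<in> carrier_vec (d+1) \<Longrightarrow>
                 A *\<^sub>v x = \<theta> j \<cdot>\<^sub>v x \<Longrightarrow> E i *\<^sub>v x = 0\<^sub>v (d+1)"
    and bipartite: "\<And>i. i \<le> d \<Longrightarrow> mat_trace (Est i * A) = 0"
    and thetas_distinct: "\<And>i j. i \<le> d \<Longrightarrow> j \<le> d \<Longrightarrow> \<theta>s i = \<theta>s j \<Longrightarrow> i = j"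
    and As_def: "As = lin_comb_mat (d+1) \<theta>s Est {0..d}"
    and tail0: "\<And>j. j \<le> d \<Longrightarrow> j \<noteq> 0 \<Longrightarrow> j \<noteq> 1 \<Longrightarrow>
       E 0 * As * E j = 0\<^sub>m (d+1) (d+1)"
    and tail1: "\<And>j k. j \<le> d \<Longrightarrow> k \<le> d \<Longrightarrow> j \<noteq> 1 \<Longrightarrow> k \<noteq> 1 \<Longrightarrow> j \<noteq> 0 \<Longrightarrow> k \<noteq> 0 \<Longrightarrow>
       E 1 * As * E j \<noteq> 0\<^sub>m (d+1) (d+1) \<Longrightarrow>
       E 1 * As * E k \<noteq> 0\<^sub>m (d+1) (d+1) \<Longrightarrow> j = k"
    and adj12: "E 1 * As * E 2 \<noteq> 0\<^sub>m (d+1) (d+1)"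
    and v_carrier: "\<And>i. i \<le> d \<Longrightarrow> v i \<in> carrier_vec (d+1)"
    and v_nz: "\<And>i. i \<le> d \<Longrightarrow> v i \<noteq> 0\<^sub>v (d+1)"
    and v_in: "\<And>i. i \<le> d \<Longrightarrow> Est i *\<^sub>v v i = v i"
    and Y_rep: "represents (d+1) v A Y"
    and alpha0: "\<alpha> 0 = 1"
    and alpha_rec: "\<And>i. i < d \<Longrightarrow>
       (if i = 0 then 0 else Y $$ (i, i - 1) * \<alpha> (i - 1)) + Y $$ (i, i + 1) * \<alpha> (i + 1)
         = \<theta> 0 * \<alpha> i"
    and w_carrier: "\<And>i. i \<le> d \<Longrightarrow> w i \<in> carrier_vec (d+1)"
    and w_nz: "\<And>i. i \<le> d \<Longrightarrow> w i \<noteq> 0\<^sub>v (d+1)"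
    and w_in: "\<And>i. i \<le> d \<Longrightarrow> E i *\<^sub>v w i = w i"
    and Z_rep: "represents (d+1) w As Z"
  shows "\<forall>i \<le> d.
    (let as = (\<lambda>j. mat_trace (E j * As));
         b = (\<lambda>j. Y $$ (j, j + 1));
         c = (\<lambda>j. Y $$ (j, j - 1));
         bc = Z $$ (0, 1) * Z $$ (1, 0);
         \<psi> = \<theta>s 1 + \<theta>s 0 - as 1 - as 0;
         \<zeta> = as 0 * as 1 - bc - \<theta>s 0 * \<theta>s 1
     in (if i = 0 then 0
         else c i * (\<theta>s (i - 1) - \<theta>s 0) * (\<theta>s (i - 1) - \<theta>s 1) * \<alpha> (i - 1))
      + (if i = d then 0
         else b i * (\<theta>s (i + 1) - \<theta>s 0) * (\<theta>s (i + 1) - \<theta>s 1) * \<alpha> (i + 1))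
      = \<theta> 2 * (\<theta>s i - \<theta>s 0) * (\<theta>s i - \<theta>s 1) * \<alpha> i
        + (\<theta> 2 - \<theta> 1) * \<psi> * \<theta>s i * \<alpha> i
        + (\<theta> 1 - \<theta> 0) * \<psi> * as 0 * \<alpha> i
        + (\<theta> 2 - \<theta> 0) * \<zeta> * \<alpha> i)"
proof -
  let ?n = "d + 1" and ?P = "basis_mat (d + 1) v" and ?Q = "basis_mat (d + 1) w"
  have Est_v: "Est k *\<^sub>v v s = (if s = k then v s else 0\<^sub>v ?n)" if "k \<le> d" "s \<le> d" for k s
    using orthogonal_projection_mult_vec[of "Est k" "Est s" ?n "v s"] Est_orth[OF that]
      Est_carrier v_carrier v_in that by auto
  obtain GP where Est_sim: "\<And>k. k < ?n \<Longrightarrow> similar_mat_wit (Est k) (coord_proj ?n k) ?P GP"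
    and sim_P: "\<And>X X'. X \<in> carrier_mat ?n ?n \<Longrightarrow> X' \<in> carrier_mat ?n ?n \<Longrightarrow>
      X * ?P = ?P * X' \<Longrightarrow> similar_mat_wit X X' ?P GP"
    by (rule adapted_basis_similarity[of ?n v Est]) (use v_carrier v_nz Est_carrier Est_v in auto)
  have Y_carr: "Y \<in> carrier_mat ?n ?n" and "A * ?P = ?P * Y"
    using Y_rep unfolding represents_def by auto
  then have AY: "similar_mat_wit A Y ?P GP"
    by (intro sim_P A_carrier)
  have Y_hollow: "hollow_tridiagonal ?n Y"
    by (rule similar_coord_proj_hollow_tridiagonal[OF Est_sim AY])
      (use Est_carrier A_carrier A_tri0 bipartite in auto)
  have Y_eq_0: "Est k * A * Est l = 0\<^sub>m ?n ?n \<longleftrightarrow> Y $$ (k, l) = 0" if "k \<le> d" "l \<le> d" for k l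
    by (rule similar_coord_proj_sandwich_eq_0_iff[OF Est_sim AY Est_sim]) (use Est_carrier A_carrier that in auto)
  have b: "Y $$ (k, k + 1) \<noteq> 0" and c: "Y $$ (k + 1, k) \<noteq> 0" if "k < d" for k
    using Y_eq_0 A_tri1 that by auto
  have A_w: "A *\<^sub>v w k = \<theta> k \<cdot>\<^sub>v w k" if "k \<le> d" for k
  proof (rule eigenprojection_fixed_imp_eigenvector[OF A_carrier, of \<theta> E])
    show "E l *\<^sub>v x = 0\<^sub>v ?n"
      if "l < ?n" "j < ?n" "j \<noteq> l" "x \<in> carrier_vec ?n" "A *\<^sub>v x = \<theta> j \<cdot>\<^sub>v x" for l j x
      using E_off[of l j x] that by simp
  qed (use that in \<open>auto intro: theta_eig E_on w_in E_carrier[simplified] w_carrier[simplified]\<close>)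
  have E_w: "E k *\<^sub>v w s = (if s = k then w s else 0\<^sub>v ?n)" if "k \<le> d" "s \<le> d" for k s
    using E_on[of k "w s"] E_off[of k s "w s"] w_carrier A_w that by auto
  obtain GQ where E_sim: "\<And>k. k < ?n \<Longrightarrow> similar_mat_wit (E k) (coord_proj ?n k) ?Q GQ"
    and sim_Q: "\<And>X X'. X \<in> carrier_mat ?n ?n \<Longrightarrow> X' \<in> carrier_mat ?n ?n \<Longrightarrow>
      X * ?Q = ?Q * X' \<Longrightarrow> similar_mat_wit X X' ?Q GQ"
    by (rule adapted_basis_similarity[of ?n w E]) (use w_carrier w_nz E_carrier E_w in auto)
  have As_carr: "As \<in> carrier_mat ?n ?n"
    unfolding As_def lin_comb_mat_def by simp
  have Z_carr: "Z \<in> carrier_mat ?n ?n" and "As * ?Q = ?Q * Z"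
    using Z_rep unfolding represents_def by auto
  then have AsZ: "similar_mat_wit As Z ?Q GQ"
    by (intro sim_Q As_carr)
  have Z_eq_0: "E k * As * E l = 0\<^sub>m ?n ?n \<longleftrightarrow> Z $$ (k, l) = 0" if "k \<le> d" "l \<le> d" for k l
    by (rule similar_coord_proj_sandwich_eq_0_iff[OF E_sim AsZ E_sim]) (use E_carrier As_carr that in auto)
  have Z_trace: "mat_trace (E k * As) = Z $$ (k, k)" if "k \<le> d" for k
    by (rule similar_coord_proj_trace[OF E_sim AsZ]) (use E_carrier As_carr that in auto)
  have Z0: "Z $$ (0, j) = 0" if "2 \<le> j" "j \<le> d" for j
    using Z_eq_0 tail0 that by simp
  have Z1: "Z $$ (1, j) = 0" if "3 \<le> j" "j \<le> d" for j
    using Z_eq_0[of 1 j] tail1[of j 2] adj12 that d3 by auto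
  have As_v: "As *\<^sub>v v s = \<theta>s s \<cdot>\<^sub>v v s" if "s \<le> d" for s
    unfolding As_def using Est_v Est_carrier v_carrier that by (intro lin_comb_mat_mult_vec) auto
  have As_sim: "similar_mat_wit As (mat_diag ?n \<theta>s) ?P GP"
    using As_carr v_carrier As_v by (intro sim_P mult_basis_mat_eigenvectors) auto
  have A_sim: "similar_mat_wit A (mat_diag ?n \<theta>) ?Q GQ"
    using A_carrier w_carrier A_w by (intro sim_Q mult_basis_mat_eigenvectors) auto
  define N where "N = GQ * ?P"
  have Y_N: "similar_mat_wit Y (mat_diag ?n \<theta>) (GP * ?Q) N"
    unfolding N_def by (rule similar_mat_wit_trans[OF similar_mat_wit_sym[OF AY] A_sim])
  have Z_N: "similar_mat_wit Z (mat_diag ?n \<theta>s) N (GP * ?Q)"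
    unfolding N_def by (rule similar_mat_wit_trans[OF similar_mat_wit_sym[OF AsZ] As_sim])
  have N_carr: "N \<in> carrier_mat ?n ?n" and "N * (GP * ?Q) = 1\<^sub>m ?n"
    using similar_mat_witD2[OF Z_carr Z_N] by auto
  then have "\<exists>j<?n. N $$ (0, j) \<noteq> 0"
    using similar_mat_witD2[OF Z_carr Z_N] by (intro mat_mult_eq_one_row_nonzero) auto
  moreover have "tridiag_mult_vec d Y \<alpha> k = \<theta> 0 * \<alpha> k" if "k < d" for k
    using alpha_rec[OF that] that by (simp add: tridiag_mult_vec_def)
  moreover have "2 \<le> d" and "mat_trace (E 0 * As) = Z $$ (0, 0)" and "mat_trace (E 1 * As) = Z $$ (1, 1)"
    using Z_trace d3 by auto
  ultimately show ?thesis
    using dual_recurrence_from_intertwiner[where d = d and N = N and Y = Y and Z = Z and \<alpha> = \<alpha>,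
        OF _ N_carr Y_carr Z_carr similar_mat_wit_intertwines(2)[OF Y_N] similar_mat_wit_intertwines(1)[OF Z_N]
        _ Z0 Z1 Y_hollow b c _ alpha0 refl refl]
    unfolding Let_def tridiag_mult_vec_def by (simp only: mult.assoc distrib_right) blast
qed

end
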